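(* Consider the pointer procedure described in the context, started with $P_0=22$ and all other pointers uninitiated, and let $R_0=22$ and, for $j\ge1$, let $R_j$ be the content of $P_0$ immediately after the $j$-th call of $\mathrm{Inc}(0)$ has finished. Then the infinite concatenation $R_0R_1R_2\cdots$ equals $K'$, i.e. the sequence $(K_{n+1})_{n\ge1}$ obtained from the classical Kolakoski sequence $K$ by deleting its first symbol.
   Context: $K=(K_n)_{n\ge1}$ denotes the classical Kolakoski sequence: the unique infinite sequence over $\{1,2\}$ with $K_1=1$ whose sequence of run lengths equals $K$ itself. $K'$ is defined by $K=1K'$. Pointer procedure: there are pointers $P_0,P_1,P_2,\dots$; each is either uninitiated or holds a word from $S=\{1,2,11,22\}$. The recursive procedure $\mathrm{Inc}(k)$ acts as follows. (i) If $P_k$ is uninitiated, set $P_k:=22$. (ii) If $k\ge1$ and $P_k$ holds two symbols ($11$ or $22$), delete one symbol (so $11\mapsto1$, $22\mapsto2$) and stop. (iii) Otherwise (i.e. $k=0$, or $k\ge1$ and $P_k$ holds a single symbol), call $\mathrm{Inc}(k+1)$; afterwards let $\ell$ be the first symbol of the word held by $P_{k+1}$ (which is not modified here), let $a$ be the symbol occurring in the word held by $P_k$ before this step, and set $P_k:=\bar a^{\,\ell}$, the word consisting of $\ell$ copies of the symbol $\bar a$, where $\bar1=2$, $\bar2=1$. Initially $P_0=22$ and all $P_k$, $k\ge1$, are uninitiated; $\mathrm{Inc}(0)$ is then called repeatedly. *)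

theory Defs
  imports Main
begin

text \<open>Meaningful when infinitely many of the words are nonempty.\<close>
definition inf_concat :: "(nat \<Rightarrow> 'a list) \<Rightarrow> nat \<Rightarrow> 'a" where
  "inf_concat R m =
     (let j = (LEAST j. m < (\<Sum>i\<le>j. length (R i)))
      in R j ! (m - (\<Sum>i<j. length (R i))))"

text \<open>Kolakoski property, 0-indexed: K i stands for the paper's K_(i+1).\<close>
definition is_kolakoski :: "(nat \<Rightarrow> nat) \<Rightarrow> bool" where
  "is_kolakoski K \<longleftrightarrow> K 0 = 1 \<and> (\<forall>n. K n \<in> {1, 2}) \<and>
     inf_concat (\<lambda>i. replicate (K i) (if even i then 1 else 2)) = K"

text \<open>The classical Kolakoski sequence (0-indexed): kol i = K_(i+1).\<close>
definition kol :: "nat \<Rightarrow> nat" where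
  "kol = (THE K. is_kolakoski K)"

text \<open>Pointer states: P k = None means uninitiated, otherwise P k = Some w with w a word.\<close>
type_synonym pstate = "nat \<Rightarrow> nat list option"

definition flip :: "nat \<Rightarrow> nat" where
  "flip a = (if a = 1 then 2 else 1)"

definition init_step :: "nat \<Rightarrow> pstate \<Rightarrow> pstate" where
  "init_step k P = (case P k of None \<Rightarrow> P(k := Some [2, 2]) | Some _ \<Rightarrow> P)"

text \<open>Big-step semantics of the recursive procedure Inc(k): inc_rel k P P' means that
  calling Inc(k) in state P terminates in state P'.\<close>
inductive inc_rel :: "nat \<Rightarrow> pstate \<Rightarrow> pstate \<Rightarrow> bool" where
  stop: "\<lbrakk> P1 = init_step k P; w = the (P1 k); k \<ge> 1; length w = 2 \<rbrakk>
         \<Longrightarrow> inc_rel k P (P1(k := Some [hd w]))"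
| recur: "\<lbrakk> P1 = init_step k P; w = the (P1 k); \<not> (k \<ge> 1 \<and> length w = 2);
           inc_rel (Suc k) P1 P2; P2 (Suc k) = Some v \<rbrakk>
         \<Longrightarrow> inc_rel k P (P2(k := Some (replicate (hd v) (flip (hd w)))))"

definition P_init :: pstate where
  "P_init = (\<lambda>k. if k = 0 then Some [2, 2] else None)"

definition is_run :: "(nat \<Rightarrow> pstate) \<Rightarrow> bool" where
  "is_run st \<longleftrightarrow> st 0 = P_init \<and> (\<forall>j. inc_rel 0 (st j) (st (Suc j)))"

end

theory Submission
  imports Defs
begin

(* Write K' = K_2 K_3 ... for the Kolakoski sequence without its first symbol.
   K' is itself a concatenation of runs: run r has length K'_r and consists of the symbol
   2 for even r and 1 for odd r (its first run is 22).  We first construct K' directly by a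
   self-reading recursion and show that 1 K' is a Kolakoski sequence; since a Kolakoski
   sequence is unique, K' is the tail of kol and the concatenation of its runs is K'.
   For the procedure, a position p of K' determines a "pointer content": the remainder of
   the run containing p, read from p onwards.  The invariant is that pointer k+i holds the
   content of the position obtained from p by i times passing to the index of the run
   containing it (uninitiated when that position is 0).  A call Inc(k), k >= 1, advances p to
   p+1 (by strong induction on p, the recursive call advancing the run index); a call
   Inc(0) hence moves P_0 from run j to run j+1.  Since Inc is deterministic, every run of
   the procedure satisfies this, so R_j is the j-th run of K', which proves the theorem. *)

section \<open>The sequence K' and its runs\<close>

definition run_sym :: "nat \<Rightarrow> nat" where
  "run_sym r = (if even r then 2 else 1)"

text \<open>pre i is the concatenation of the first i runs of K'.  The length of run i (i \<ge> 1)
  is the i-th symbol of K', which is already present in pre i.\<close>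
fun pre :: "nat \<Rightarrow> nat list" where
  "pre 0 = []"
| "pre (Suc i) = pre i @ replicate (if i = 0 then 2 else pre i ! i) (run_sym i)"

definition kp :: "nat \<Rightarrow> nat" where
  "kp n = pre (Suc n) ! n"

definition run_start :: "nat \<Rightarrow> nat" where
  "run_start r = length (pre r)"

definition run :: "nat \<Rightarrow> nat list" where
  "run r = replicate (kp r) (run_sym r)"

text \<open>The prefixes are words over {1,2} and grow fast enough for the recursion to be
  well defined: pre i has more than i symbols once i \<ge> 1.\<close>
lemma pre_symbols_length: "set (pre i) \<subseteq> {1, 2} \<and> (1 \<le> i \<longrightarrow> i + 1 \<le> length (pre i))"
proof (induction i)
  case 0
  then show ?case by simp
next
  case (Suc i)
  show ?case
  proof (cases "i = 0")
    case True
    then show ?thesis by (simp add: run_sym_def)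
  next
    case False
    then have len: "i < length (pre i)" using Suc by auto
    then have "pre i ! i \<in> {1, 2}" using Suc nth_mem by blast
    then show ?thesis using Suc False len by (auto simp: run_sym_def)
  qed
qed

lemma pre_mono: "length (pre i) \<le> length (pre (i + d))"
  by (induction d) auto

lemma pre_prefix: "n < length (pre i) \<Longrightarrow> pre (i + d) ! n = pre i ! n"
proof (induction d)
  case 0
  then show ?case by simp
next
  case (Suc d)
  then have "n < length (pre (i + d))" using pre_mono[of i d] by simp
  then show ?case using Suc by (simp add: nth_append)
qed

lemma kp_pre: "n < length (pre m) \<Longrightarrow> kp n = pre m ! n"
proof -
  assume m: "n < length (pre m)"
  have n: "n < length (pre (Suc n))" using pre_symbols_length[of "Suc n"] by simp
  show ?thesis
  proof (cases "m \<le> Suc n")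
    case True
    then obtain d where "Suc n = m + d" using le_Suc_ex by blast
    then show ?thesis using pre_prefix[OF m, of d] by (simp add: kp_def)
  next
    case False
    then obtain d where "m = Suc n + d" using le_Suc_ex[of "Suc n" m] by auto
    then show ?thesis using pre_prefix[OF n, of d] by (simp add: kp_def)
  qed
qed

lemma kp_12: "kp n \<in> {1, 2}"
proof -
  have "n < length (pre (Suc n))" using pre_symbols_length[of "Suc n"] by simp
  then have "pre (Suc n) ! n \<in> set (pre (Suc n))" by (rule nth_mem)
  then show ?thesis using pre_symbols_length[of "Suc n"] by (auto simp: kp_def)
qed

lemma kp_pos: "0 < kp n"
  using kp_12[of n] by auto

lemma kp_0: "kp 0 = 2"
  by (simp add: kp_def run_sym_def)

lemma run_start_0: "run_start 0 = 0"
  by (simp add: run_start_def)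

lemma run_start_1: "run_start (Suc 0) = 2"
  by (simp add: run_start_def run_sym_def)

lemma run_start_Suc: "run_start (Suc r) = run_start r + kp r"
proof (cases "r = 0")
  case True
  then show ?thesis by (simp add: run_start_def kp_0)
next
  case False
  then have "r < length (pre r)" using pre_symbols_length[of r] by auto
  then have "pre r ! r = kp r" using kp_pre by simp
  then show ?thesis using False by (simp add: run_start_def)
qed

lemma run_start_sum: "run_start r = (\<Sum>i<r. kp i)"
  by (induction r) (auto simp: run_start_0 run_start_Suc)

lemma run_start_ge: "1 \<le> r \<Longrightarrow> r + 1 \<le> run_start r"
  using pre_symbols_length[of r] by (simp add: run_start_def)

lemma run_start_mono: "a \<le> b \<Longrightarrow> run_start a \<le> run_start b"
  by (rule lift_Suc_mono_le[of run_start]) (auto simp: run_start_Suc)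

lemma kp_in_run: "run_start r \<le> p \<Longrightarrow> p < run_start (Suc r) \<Longrightarrow> kp p = run_sym r"
proof -
  assume p: "run_start r \<le> p" "p < run_start (Suc r)"
  then have "kp p = pre (Suc r) ! p" by (intro kp_pre) (simp add: run_start_def)
  also have "\<dots> = run_sym r" using p by (simp add: nth_append run_start_def)
  finally show ?thesis .
qed

definition run_of :: "nat \<Rightarrow> nat" where
  "run_of p = (LEAST r. p < run_start (Suc r))"

lemma run_of_bounds: "run_start (run_of p) \<le> p \<and> p < run_start (Suc (run_of p))"
proof
  have "p < run_start (Suc p)" using run_start_ge[of "Suc p"] by simp
  then show "p < run_start (Suc (run_of p))"
    unfolding run_of_def by (rule LeastI)
  show "run_start (run_of p) \<le> p"
  proof (cases "run_of p")
    case (Suc r)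
    then have "\<not> p < run_start (Suc r)"
      using Least_le[of "\<lambda>r. p < run_start (Suc r)" r] unfolding run_of_def by auto
    then show ?thesis using Suc by simp
  qed (simp add: run_start_0)
qed

lemma run_of_eq:
  assumes "run_start r \<le> p" "p < run_start (Suc r)"
  shows "run_of p = r"
proof (rule ccontr)
  assume "run_of p \<noteq> r"
  then consider "Suc r \<le> run_of p" | "Suc (run_of p) \<le> r" by linarith
  then show False
    using assms run_of_bounds[of p] run_start_mono le_less_trans not_less by metis
qed

text \<open>Run indices lag behind positions; this makes the recursion of Inc well founded.\<close>
lemma run_of_less: "1 \<le> p \<Longrightarrow> run_of p < p"
  using run_of_bounds[of p] run_start_ge[of "run_of p"] by (cases "run_of p = 0") auto

lemma kp_run_of: "kp p = run_sym (run_of p)"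
  using run_of_bounds[of p] kp_in_run by blast

lemma run_of_0: "run_of 0 = 0"
  by (rule run_of_eq) (simp_all add: run_start_0 run_start_1)

lemma run_of_1: "run_of (Suc 0) = 0"
  by (rule run_of_eq) (simp_all add: run_start_0 run_start_1)

section \<open>K' is the tail of the Kolakoski sequence\<close>

lemma inf_concat_at:
  assumes "(\<Sum>i<j. length (R i)) \<le> m" "m < (\<Sum>i<Suc j. length (R i))"
  shows "inf_concat R m = R j ! (m - (\<Sum>i<j. length (R i)))"
proof -
  have "(LEAST j. m < (\<Sum>i\<le>j. length (R i))) = j"
  proof (rule Least_equality)
    show "m < (\<Sum>i\<le>j. length (R i))" using assms(2) by (simp add: lessThan_Suc_atMost)
  next
    fix y assume y: "m < (\<Sum>i\<le>y. length (R i))"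
    show "j \<le> y"
    proof (rule ccontr)
      assume "\<not> j \<le> y"
      then have "(\<Sum>i\<le>y. length (R i)) \<le> (\<Sum>i<j. length (R i))"
        by (intro sum_mono2) auto
      then show False using y assms(1) by simp
    qed
  qed
  then show ?thesis by (simp add: inf_concat_def Let_def)
qed

lemma inf_concat_replicate:
  assumes "(\<Sum>i<j. L i) \<le> m" "m < (\<Sum>i<Suc j. L i)"
  shows "inf_concat (\<lambda>i. replicate (L i) (c i)) m = c j"
  using inf_concat_at[of "\<lambda>i. replicate (L i) (c i)" j m] assms by simp

lemma inf_concat_runs: "inf_concat run = kp"
proof
  fix m
  have "inf_concat (\<lambda>i. replicate (kp i) (run_sym i)) m = run_sym (run_of m)"
    using run_of_bounds[of m] by (intro inf_concat_replicate) (simp_all add: run_start_sum)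
  then show "inf_concat run m = kp m"
    by (simp add: run_def[abs_def] kp_run_of)
qed

definition kol_seq :: "nat \<Rightarrow> nat" where
  "kol_seq n = (case n of 0 \<Rightarrow> 1 | Suc m \<Rightarrow> kp m)"

text \<open>1 K' is a Kolakoski sequence: block 0 is the initial 1, block r+1 is run r of K'.\<close>
lemma kol_seq_is_kolakoski: "is_kolakoski kol_seq"
  unfolding is_kolakoski_def
proof (intro conjI allI ext)
  show "kol_seq 0 = 1" by (simp add: kol_seq_def)
next
  fix n
  show "kol_seq n \<in> {1, 2}" using kp_12 by (cases n) (auto simp: kol_seq_def)
next
  fix m
  let ?c = "\<lambda>i. if even i then 1 else 2 :: nat"
  have sums: "(\<Sum>i<Suc r. kol_seq i) = 1 + run_start r" for r
    by (simp only: sum.lessThan_Suc_shift) (simp add: kol_seq_def run_start_sum)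
  show "inf_concat (\<lambda>i. replicate (kol_seq i) (?c i)) m = kol_seq m"
  proof (cases m)
    case 0
    then show ?thesis using inf_concat_replicate[of kol_seq 0 m ?c] by (simp add: kol_seq_def)
  next
    case (Suc m')
    let ?r = "run_of m'"
    have "inf_concat (\<lambda>i. replicate (kol_seq i) (?c i)) m = ?c (Suc ?r)"
      using run_of_bounds[of m'] Suc sums[of ?r] sums[of "Suc ?r"]
      by (intro inf_concat_replicate) simp_all
    then show ?thesis using Suc by (simp add: kol_seq_def kp_run_of run_sym_def)
  qed
qed

lemma kolakoski_block:
  assumes "is_kolakoski K" "(\<Sum>i<j. K i) \<le> m" "m < (\<Sum>i<Suc j. K i)"
  shows "K m = (if even j then 1 else 2)"
  using assms inf_concat_replicate[of K j m "\<lambda>i. if even i then 1 else 2 :: nat"]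
  by (simp add: is_kolakoski_def)

lemma kolakoski_1: "is_kolakoski K \<Longrightarrow> K 1 = 2"
  using kolakoski_block[of K 1 1] kp_12 by (force simp: is_kolakoski_def)

text \<open>The first q blocks of a Kolakoski sequence cover more than q positions (q \<ge> 2),
  since the first two blocks have lengths 1 and 2 and every block is nonempty.\<close>
lemma kolakoski_sums_grow:
  assumes K: "is_kolakoski K" and "2 \<le> q"
  shows "q < (\<Sum>i<q. K i)"
  using assms(2)
proof (induction q rule: dec_induct)
  case base
  then show ?case using K kolakoski_1[OF K] by (simp add: is_kolakoski_def numeral_2_eq_2)
next
  case (step q)
  have "K q \<in> {1, 2}" using K by (simp add: is_kolakoski_def)
  then show ?case using step by auto
qed

lemma find_block:
  fixes T :: "nat \<Rightarrow> nat"
  assumes "T 0 = 0" "m < T N"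
  shows "\<exists>j<N. T j \<le> m \<and> m < T (Suc j)"
  using assms(2)
proof (induction N)
  case 0
  then show ?case using assms(1) by simp
next
  case (Suc N)
  then show ?case by (cases "m < T N") (auto intro: less_SucI)
qed

text \<open>A Kolakoski sequence is determined by its values before n, for n \<ge> 2: position n
  lies in a block with index j < n, whose symbol depends only on j.\<close>
lemma kolakoski_unique:
  assumes K: "is_kolakoski K" and K2: "is_kolakoski K2"
  shows "K = K2"
proof -
  have "\<forall>m<n. K m = K2 m" for n
  proof (induction n)
    case (Suc n)
    have "K n = K2 n"
    proof (cases "n < 2")
      case True
      then show ?thesis using K K2 kolakoski_1[OF K] kolakoski_1[OF K2]
        by (auto simp: is_kolakoski_def less_2_cases_iff)
    next
      case False
      obtain j where j: "j < n" "(\<Sum>i<j. K i) \<le> n" "n < (\<Sum>i<Suc j. K i)"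
        using find_block[of "\<lambda>j. \<Sum>i<j. K i" n n] kolakoski_sums_grow[OF K, of n] False
        by auto
      have before: "(\<Sum>i<j. K i) = (\<Sum>i<j. K2 i)" and at: "K j = K2 j"
        using Suc j(1) by (auto intro: sum.cong)
      show ?thesis
        using kolakoski_block[OF K j(2,3)] kolakoski_block[OF K2, of j n] j before at by simp
    qed
    then show ?case using Suc by (auto simp: less_Suc_eq)
  qed simp
  then show ?thesis by (auto intro: lessI)
qed

lemma kol_tail: "kol (Suc m) = kp m"
proof -
  have "kol = kol_seq"
    unfolding kol_def
    using kol_seq_is_kolakoski kolakoski_unique by blast
  then show ?thesis by (simp add: kol_seq_def)
qed

section \<open>Pointer contents along K'\<close>

definition run_rest :: "nat \<Rightarrow> nat list" where
  "run_rest p = replicate (run_start (Suc (run_of p)) - p) (kp p)"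

lemma run_rest_start: "run_rest (run_start r) = run r"
proof -
  have bounds: "run_start r \<le> run_start r" "run_start r < run_start (Suc r)"
    using kp_pos[of r] by (simp_all add: run_start_Suc)
  show ?thesis
    using run_of_eq[OF bounds] kp_in_run[OF bounds]
    by (simp add: run_rest_def run_def run_start_Suc)
qed

lemma run_rest_1: "run_rest (Suc 0) = [2]"
  using kp_run_of[of "Suc 0"] by (simp add: run_rest_def run_of_1 run_start_1 run_sym_def)

lemma hd_run_rest: "hd (run_rest p) = kp p"
  using run_of_bounds[of p] by (simp add: run_rest_def)

lemma run_rest_Suc_inside:
  assumes "length (run_rest p) = 2"
  shows "run_of (Suc p) = run_of p \<and> run_rest (Suc p) = [hd (run_rest p)]"
proof -
  have run_end: "run_start (Suc (run_of p)) = p + 2" and "run_start (run_of p) \<le> p"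
    using assms run_of_bounds[of p] by (auto simp: run_rest_def)
  then have "run_of (Suc p) = run_of p" by (intro run_of_eq) auto
  then show ?thesis
    using run_end kp_run_of[of p] kp_run_of[of "Suc p"] hd_run_rest[of p]
    by (simp add: run_rest_def numeral_2_eq_2)
qed

lemma run_rest_Suc_next:
  assumes "length (run_rest p) \<noteq> 2"
  shows "run_of (Suc p) = Suc (run_of p) \<and> run_rest (Suc p) = run (Suc (run_of p))"
proof -
  have "run_start (Suc (run_of p)) - p \<le> 2"
    using run_of_bounds[of p] kp_12[of "run_of p"] by (auto simp: run_start_Suc)
  moreover have "run_start (Suc (run_of p)) - p \<noteq> 2"
    using assms by (simp add: run_rest_def)
  ultimately have start: "Suc p = run_start (Suc (run_of p))"
    using run_of_bounds[of p] by arith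
  have "run_of (Suc p) = Suc (run_of p)"
    by (rule run_of_eq) (use start kp_pos in \<open>simp_all add: run_start_Suc\<close>)
  then show ?thesis using start run_rest_start[of "Suc (run_of p)"] by simp
qed

definition pointer_at :: "nat \<Rightarrow> nat list option" where
  "pointer_at q = (if q = 0 then None else Some (run_rest q))"

definition tracks :: "nat \<Rightarrow> nat \<Rightarrow> pstate \<Rightarrow> bool" where
  "tracks k p P \<longleftrightarrow> (\<forall>i. P (k + i) = pointer_at ((run_of ^^ i) p))"

lemma tracks_unfold: "tracks k p P \<longleftrightarrow> P k = pointer_at p \<and> tracks (Suc k) (run_of p) P"
  unfolding tracks_def
proof safe
  fix i assume "P k = pointer_at p" "\<forall>i. P (Suc k + i) = pointer_at ((run_of ^^ i) (run_of p))"
  then show "P (k + i) = pointer_at ((run_of ^^ i) p)"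
    by (cases i) (simp_all add: funpow_Suc_right del: funpow.simps)
qed (metis add_0_right funpow_0, metis add_Suc_shift funpow_Suc_right comp_apply)

lemma tracks_upd: "tracks (Suc k) q (P(k := x)) \<longleftrightarrow> tracks (Suc k) q P"
  by (simp add: tracks_def)

section \<open>The procedure\<close>

lemma inc_rel_det: "inc_rel k P P1 \<Longrightarrow> inc_rel k P P2 \<Longrightarrow> P2 = P1"
proof (induction arbitrary: P2 rule: inc_rel.induct)
  case (stop P1 k P w)
  from stop.prems show ?case by cases (use stop.hyps in auto)
next
  case (recur P1 k P w Q v)
  from recur.prems show ?case by cases (use recur.hyps recur.IH in fastforce)+
qed

lemma flip_run_sym: "flip (run_sym r) = run_sym (Suc r)"
  by (simp add: flip_def run_sym_def)

lemma inc_advances: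
  "1 \<le> k \<Longrightarrow> tracks k p P \<Longrightarrow> \<exists>P'. inc_rel k P P' \<and> tracks k (Suc p) P'"
proof (induction p arbitrary: k P rule: less_induct)
  case (less p)
  have Pk: "P k = pointer_at p" and higher: "tracks (Suc k) (run_of p) P"
    using less.prems(2) tracks_unfold[of k p P] by blast+
  consider "p = 0" | "p \<noteq> 0" "length (run_rest p) = 2" | "p \<noteq> 0" "length (run_rest p) \<noteq> 2"
    by blast
  then show ?case
  proof cases
    case 1
    then have "init_step k P = P(k := Some [2, 2])"
      using Pk by (simp add: init_step_def pointer_at_def)
    then have "inc_rel k P (P(k := Some [2]))"
      using inc_rel.stop[of "P(k := Some [2, 2])" k P "[2, 2]"] less.prems(1) by simp
    moreover have "tracks k (Suc p) (P(k := Some [2]))"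
      using 1 higher
      by (simp add: tracks_unfold[of k] tracks_upd pointer_at_def run_rest_1 run_of_0 run_of_1)
    ultimately show ?thesis by blast
  next
    case 2
    then have "init_step k P = P" using Pk by (simp add: init_step_def pointer_at_def)
    then have "inc_rel k P (P(k := Some [hd (run_rest p)]))"
      using inc_rel.stop[of P k P "run_rest p"] less.prems(1) 2 Pk by (simp add: pointer_at_def)
    moreover have "tracks k (Suc p) (P(k := Some [hd (run_rest p)]))"
      using run_rest_Suc_inside[OF 2(2)] higher
      by (simp add: tracks_unfold[of k] tracks_upd pointer_at_def)
    ultimately show ?thesis by blast
  next
    case 3
    let ?r = "run_of p"
    have init: "init_step k P = P" using Pk 3 by (simp add: init_step_def pointer_at_def)
    obtain Q where Q: "inc_rel (Suc k) P Q" "tracks (Suc k) (Suc ?r) Q"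
      using less.IH[OF run_of_less, of "Suc k" P] 3 higher by auto
    have Qk: "Q (Suc k) = Some (run_rest (Suc ?r))"
      using Q(2) by (simp add: tracks_unfold[of "Suc k"] pointer_at_def)
    have new_run: "replicate (hd (run_rest (Suc ?r))) (flip (hd (run_rest p))) = run (Suc ?r)"
      by (simp add: hd_run_rest kp_run_of flip_run_sym run_def)
    have "inc_rel k P (Q(k := Some (run (Suc ?r))))"
      using inc_rel.recur[of P k P "run_rest p" Q "run_rest (Suc ?r)"] init 3 Q(1) Qk Pk new_run
      by (simp add: pointer_at_def)
    moreover have "tracks k (Suc p) (Q(k := Some (run (Suc ?r))))"
      using run_rest_Suc_next[OF 3(2)] Q(2)
      by (simp add: tracks_unfold[of k] tracks_upd pointer_at_def)
    ultimately show ?thesis by blast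
  qed
qed

definition after_calls :: "nat \<Rightarrow> pstate \<Rightarrow> bool" where
  "after_calls j P \<longleftrightarrow> P 0 = Some (run j) \<and> tracks 1 j P"

text \<open>Position 0 is a fixed point of run_of, so in the initial state all pointers above
  P_0 are uninitiated.\<close>
lemma funpow_run_of_0: "(run_of ^^ i) 0 = 0"
  by (induction i) (simp_all add: run_of_0)

lemma after_calls_init: "after_calls 0 P_init"
  by (simp add: after_calls_def tracks_def P_init_def pointer_at_def run_def kp_0 run_sym_def
      funpow_run_of_0 numeral_2_eq_2)

lemma inc0_advances: "after_calls j P \<Longrightarrow> \<exists>P'. inc_rel 0 P P' \<and> after_calls (Suc j) P'"
proof -
  assume "after_calls j P"
  then have P0: "P 0 = Some (run j)" and higher: "tracks 1 j P"
    by (auto simp: after_calls_def)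
  have init: "init_step 0 P = P" using P0 by (simp add: init_step_def)
  obtain Q where Q: "inc_rel 1 P Q" "tracks 1 (Suc j) Q"
    using inc_advances[OF _ higher] by auto
  have Q1: "Q 1 = Some (run_rest (Suc j))"
    using Q(2) by (simp add: tracks_unfold[of "Suc 0"] pointer_at_def)
  have new_run: "replicate (hd (run_rest (Suc j))) (flip (hd (run j))) = run (Suc j)"
    using kp_pos[of j] by (simp add: hd_run_rest flip_run_sym run_def)
  have "inc_rel 0 P (Q(0 := Some (run (Suc j))))"
    using inc_rel.recur[of P 0 P "run j" Q "run_rest (Suc j)"] init Q(1) Q1 P0 new_run by simp
  moreover have "after_calls (Suc j) (Q(0 := Some (run (Suc j))))"
    using Q(2) tracks_upd[of 0] by (simp add: after_calls_def)
  ultimately show ?thesis by blast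
qed

text \<open>Some run of the procedure exists (built step by step from inc0_advances), and by
  determinism every run is described by after_calls.\<close>
lemma run_exists: "\<exists>st. is_run st"
proof -
  obtain next_state where next_state:
    "\<And>j P. after_calls j P \<Longrightarrow>
      inc_rel 0 P (next_state j P) \<and> after_calls (Suc j) (next_state j P)"
    using inc0_advances by metis
  define st where "st = rec_nat P_init next_state"
  have "after_calls j (st j) \<and> inc_rel 0 (st j) (st (Suc j))" for j
    by (induction j) (simp_all add: st_def next_state after_calls_init)
  then have "is_run st" by (simp add: is_run_def st_def)
  then show ?thesis by blast
qed

lemma run_after_calls: "is_run st \<Longrightarrow> after_calls j (st j)"
proof (induction j)
  case 0
  then show ?case using after_calls_init by (simp add: is_run_def)
next
  case (Suc j)
  then show ?case using inc0_advances inc_rel_det by (metis is_run_def)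
qed

theorem mainTheorem3:
  shows "(\<exists>st. is_run st) \<and>
    (\<forall>st. is_run st \<longrightarrow>
       (let R = (\<lambda>j. if j = 0 then [2, 2] else the (st j 0))
        in (\<forall>j. R j \<noteq> []) \<and> inf_concat R = (\<lambda>m. kol (Suc m))))"
proof (intro conjI allI impI)
  show "\<exists>st. is_run st" by (rule run_exists)
next
  fix st assume st: "is_run st"
  have "(\<lambda>j. if j = 0 then [2, 2] else the (st j 0)) = run"
  proof
    fix j
    show "(if j = 0 then [2, 2] else the (st j 0)) = run j"
      using run_after_calls[OF st, of j]
      by (simp add: after_calls_def run_def kp_0 run_sym_def numeral_2_eq_2)
  qed
  moreover have "run j \<noteq> []" for j using kp_pos[of j] by (simp add: run_def)
  ultimately show "let R = (\<lambda>j. if j = 0 then [2, 2] else the (st j 0))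
        in (\<forall>j. R j \<noteq> []) \<and> inf_concat R = (\<lambda>m. kol (Suc m))"
    by (simp add: inf_concat_runs kol_tail)
qed

end
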